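(* For every formula $\phi$, $\vdash_{\mathsf{BB'IW}}\phi$ if and only if $\phi$ is $\Lambda_{\mathrm{NF}}$-inhabited.
   Context: Formulas are built from propositional atoms with $\to$. $\vdash_{\mathsf{BB'IW}}\phi$ means that $\phi$ is derivable by modus ponens from the axioms consisting of all instances of $(\chi\to\psi)\to((\phi\to\chi)\to(\phi\to\psi))$ (${\sf B}$), $(\phi\to\chi)\to((\chi\to\psi)\to(\phi\to\psi))$ (${\sf B'}$), $\phi\to\phi$ (${\sf I}$), $(\phi\to(\phi\to\chi))\to(\phi\to\chi)$ (${\sf W}$); equivalently, some combinator over the basis ${\sf B},{\sf B'},{\sf I},{\sf W}$ has type $\phi$. Let $\mathcal X$ be a countably infinite set of variables with an injective map $\mathcal O:\mathcal X\to\mathbb N$; write $x<y$ iff $\mathcal O(x)<\mathcal O(y)$. Terms are terms of pure $\lambda$-calculus over $\mathcal X$, not identified up to $\alpha$-conversion; two distinct $\lambda$'s never bind the same variable and no variable is both free and bound in a term. HRM terms: every variable; $\lambda x.M$ if $M$ is HRM and $x$ is the greatest free variable of $M$; $(MN)$ if $M,N$ are HRM and for each free variable $x$ of $M$ there is a free variable $y$ of $N$ with $x\le y$. Fix $\Omega$ from variables to formulas with $\Omega^{-1}(\phi)$ infinite for all $\phi$. Typing: $x:\Omega(x)$; if $x:\chi$, $M:\psi$ and $\lambda x.M$ is HRM then $\lambda x.M:\chi\to\psi$; if $M:\chi\to\psi$, $N:\chi$, $(MN)$ HRM then $(MN):\psi$. $\Lambda_{\mathrm{NF}}$ is the set of typed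 terms in $\beta$-normal form; $\phi$ is $\Lambda_{\mathrm{NF}}$-inhabited if some closed term of $\Lambda_{\mathrm{NF}}$ has type $\phi$. *)

theory Defs
  imports Main
begin

datatype 'a form = Atom 'a | Imp "'a form" "'a form" (infixr "\<rightarrow>\<^sub>f" 25)

inductive BBIW_derivable :: "'a form \<Rightarrow> bool" where
  ax_B: "BBIW_derivable ((\<chi> \<rightarrow>\<^sub>f \<psi>) \<rightarrow>\<^sub>f ((\<phi> \<rightarrow>\<^sub>f \<chi>) \<rightarrow>\<^sub>f (\<phi> \<rightarrow>\<^sub>f \<psi>)))"
| ax_B': "BBIW_derivable ((\<phi> \<rightarrow>\<^sub>f \<chi>) \<rightarrow>\<^sub>f ((\<chi> \<rightarrow>\<^sub>f \<psi>) \<rightarrow>\<^sub>f (\<phi> \<rightarrow>\<^sub>f \<psi>)))"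
| ax_I: "BBIW_derivable (\<phi> \<rightarrow>\<^sub>f \<phi>)"
| ax_W: "BBIW_derivable ((\<phi> \<rightarrow>\<^sub>f (\<phi> \<rightarrow>\<^sub>f \<chi>)) \<rightarrow>\<^sub>f (\<phi> \<rightarrow>\<^sub>f \<chi>))"
| mp: "BBIW_derivable (\<phi> \<rightarrow>\<^sub>f \<psi>) \<Longrightarrow> BBIW_derivable \<phi> \<Longrightarrow> BBIW_derivable \<psi>"

datatype 'v trm = Var 'v | Lam 'v "'v trm" | App "'v trm" "'v trm"

fun FV :: "'v trm \<Rightarrow> 'v set" where
  "FV (Var x) = {x}"
| "FV (Lam x M) = FV M - {x}"
| "FV (App M N) = FV M \<union> FV N"

fun binders :: "'v trm \<Rightarrow> 'v list" where
  "binders (Var x) = []"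
| "binders (Lam x M) = x # binders M"
| "binders (App M N) = binders M @ binders N"

text \<open>Term convention: distinct lambdas bind distinct variables, and no variable
  is both free and bound.\<close>
definition wf_term :: "'v trm \<Rightarrow> bool" where
  "wf_term M \<longleftrightarrow> distinct (binders M) \<and> set (binders M) \<inter> FV M = {}"

definition closed :: "'v trm \<Rightarrow> bool" where
  "closed M \<longleftrightarrow> FV M = {}"

fun beta_normal :: "'v trm \<Rightarrow> bool" where
  "beta_normal (Var x) = True"
| "beta_normal (Lam x M) = beta_normal M"
| "beta_normal (App M N) = ((\<forall>x P. M \<noteq> Lam x P) \<and> beta_normal M \<and> beta_normal N)"

definition greatest_fv :: "('v \<Rightarrow> nat) \<Rightarrow> 'v \<Rightarrow> 'v trm \<Rightarrow> bool" where
  "greatest_fv ord x M \<longleftrightarrow> x \<in> FV M \<and> (\<forall>y\<in>FV M. ord y \<le> ord x)"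

inductive HRM :: "('v \<Rightarrow> nat) \<Rightarrow> 'v trm \<Rightarrow> bool" for ord where
  HRM_Var: "HRM ord (Var x)"
| HRM_Lam: "HRM ord M \<Longrightarrow> greatest_fv ord x M \<Longrightarrow> HRM ord (Lam x M)"
| HRM_App: "HRM ord M \<Longrightarrow> HRM ord N \<Longrightarrow> (\<forall>x\<in>FV M. \<exists>y\<in>FV N. ord x \<le> ord y)
            \<Longrightarrow> HRM ord (App M N)"

inductive has_type :: "('v \<Rightarrow> nat) \<Rightarrow> ('v \<Rightarrow> 'a form) \<Rightarrow> 'v trm \<Rightarrow> 'a form \<Rightarrow> bool"
  for ord \<Omega> where
  ty_Var: "has_type ord \<Omega> (Var x) (\<Omega> x)"
| ty_Lam: "has_type ord \<Omega> M \<psi> \<Longrightarrow> HRM ord (Lam x M)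
           \<Longrightarrow> has_type ord \<Omega> (Lam x M) (\<Omega> x \<rightarrow>\<^sub>f \<psi>)"
| ty_App: "has_type ord \<Omega> M (\<chi> \<rightarrow>\<^sub>f \<psi>) \<Longrightarrow> has_type ord \<Omega> N \<chi> \<Longrightarrow> HRM ord (App M N)
           \<Longrightarrow> has_type ord \<Omega> (App M N) \<psi>"

definition NF_inhabited :: "('v \<Rightarrow> nat) \<Rightarrow> ('v \<Rightarrow> 'a form) \<Rightarrow> 'a form \<Rightarrow> bool" where
  "NF_inhabited ord \<Omega> \<phi> \<longleftrightarrow>
     (\<exists>M. wf_term M \<and> closed M \<and> beta_normal M \<and> has_type ord \<Omega> M \<phi>)"

end

theory Submission
  imports Defs
begin

text \<open>
  A typed HRM term \<open>M : \<psi>\<close> with free variables \<open>x\<^sub>1 < \<dots> < x\<^sub>n\<close> yields a derivation of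
  \<open>\<Omega> x\<^sub>1 \<rightarrow> \<dots> \<rightarrow> \<Omega> x\<^sub>n \<rightarrow> \<psi>\<close>: an abstraction binds the greatest free variable, i.e.\ the
  last premise, and at an application the HRM condition says that the argument carries the
  largest free variable, so the two premise lists can be merged from the top down using
  \<open>B\<close>, \<open>B'\<close> and the two \<open>S\<close>-like theorems that \<open>W\<close> makes derivable.

  Conversely, derivable formulas are inhabited by normalisation by evaluation: a Kripke
  logical relation whose worlds are the finite sets of free variables, with accessibility
  given by domination under the variable order, validates the axioms and modus ponens, and
  reflection/reification turns its truth at the empty world into a closed \<open>\<beta>\<close>-normal
  inhabitant. Fresh variables of any type above any finite set exist because every fibre of
  \<open>\<Omega>\<close> is infinite and the order is injective.
\<close>

notation BBIW_derivable ("\<turnstile> _" [20] 20)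

lemma sorted_list_of_set_Max:
  fixes S :: "'a::linorder set"
  assumes "finite S" "S \<noteq> {}"
  shows "sorted_list_of_set S = sorted_list_of_set (S - {Max S}) @ [Max S]"
proof -
  let ?l = "sorted_list_of_set (S - {Max S}) @ [Max S]"
  have fin: "finite (S - {Max S})" using assms by simp
  have below: "\<forall>x\<in>S - {Max S}. x < Max S"
    using assms Max_ge by (fastforce simp: order.strict_iff_order)
  have "sorted_wrt (<) ?l" using fin below
    by (simp add: sorted_wrt_append sorted_list_of_set.strict_sorted_key_list_of_set)
  moreover have "set ?l = S" using fin assms Max_in by auto
  moreover have "length ?l = card S" using fin assms
    by (simp add: card_Diff_singleton Max_in) (metis Suc_pred card_gt_0_iff)
  ultimately show ?thesis
    using sorted_list_of_set_unique[of S ?l] assms by simp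
qed

definition dominated :: "'a::linorder set \<Rightarrow> 'a set \<Rightarrow> bool" where
  "dominated A B \<longleftrightarrow> (\<forall>a\<in>A. \<exists>b\<in>B. a \<le> b)"

lemma dominated_simps [simp]:
  "dominated {} B"
  "dominated A A"
  "dominated (A \<union> B) C \<longleftrightarrow> dominated A C \<and> dominated B C"
  unfolding dominated_def by auto

lemma dominated_UnI1: "dominated A B \<Longrightarrow> dominated A (B \<union> C)"
  and dominated_UnI2: "dominated A C \<Longrightarrow> dominated A (B \<union> C)"
  unfolding dominated_def by auto

lemma dominated_empty_iff: "dominated A {} \<longleftrightarrow> A = {}"
  unfolding dominated_def by auto

lemma not_dominated_imp_dominated: "\<not> dominated A B \<Longrightarrow> dominated B A"
  unfolding dominated_def by (meson linorder_le_cases order_trans)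

lemma dominated_Max_le:
  assumes "finite A" "finite B" "B \<noteq> {}" "dominated A B" "a \<in> A"
  shows "a \<le> Max B"
  using assms unfolding dominated_def by (meson Max_ge order_trans)

lemma derivable_prefix: "\<turnstile> X \<rightarrow>\<^sub>f Y \<Longrightarrow> \<turnstile> (C \<rightarrow>\<^sub>f X) \<rightarrow>\<^sub>f (C \<rightarrow>\<^sub>f Y)"
  by (rule mp[OF ax_B])

lemma derivable_suffix: "\<turnstile> X \<rightarrow>\<^sub>f Y \<Longrightarrow> \<turnstile> (Y \<rightarrow>\<^sub>f Z) \<rightarrow>\<^sub>f (X \<rightarrow>\<^sub>f Z)"
  by (rule mp[OF ax_B'])

lemma derivable_trans [trans]: "\<turnstile> X \<rightarrow>\<^sub>f Y \<Longrightarrow> \<turnstile> Y \<rightarrow>\<^sub>f Z \<Longrightarrow> \<turnstile> X \<rightarrow>\<^sub>f Z"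
  by (rule mp[OF derivable_suffix])

lemma derivable_S: "\<turnstile> (C \<rightarrow>\<^sub>f A \<rightarrow>\<^sub>f B) \<rightarrow>\<^sub>f (C \<rightarrow>\<^sub>f A) \<rightarrow>\<^sub>f (C \<rightarrow>\<^sub>f B)"
proof -
  have "\<turnstile> (C \<rightarrow>\<^sub>f A \<rightarrow>\<^sub>f B) \<rightarrow>\<^sub>f ((A \<rightarrow>\<^sub>f B) \<rightarrow>\<^sub>f (C \<rightarrow>\<^sub>f B)) \<rightarrow>\<^sub>f (C \<rightarrow>\<^sub>f C \<rightarrow>\<^sub>f B)"
    by (rule ax_B')
  also have "\<turnstile> (((A \<rightarrow>\<^sub>f B) \<rightarrow>\<^sub>f (C \<rightarrow>\<^sub>f B)) \<rightarrow>\<^sub>f (C \<rightarrow>\<^sub>f C \<rightarrow>\<^sub>f B))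
                \<rightarrow>\<^sub>f ((C \<rightarrow>\<^sub>f A) \<rightarrow>\<^sub>f (C \<rightarrow>\<^sub>f C \<rightarrow>\<^sub>f B))"
    by (rule derivable_suffix, rule ax_B')
  also have "\<turnstile> ((C \<rightarrow>\<^sub>f A) \<rightarrow>\<^sub>f (C \<rightarrow>\<^sub>f C \<rightarrow>\<^sub>f B)) \<rightarrow>\<^sub>f ((C \<rightarrow>\<^sub>f A) \<rightarrow>\<^sub>f (C \<rightarrow>\<^sub>f B))"
    by (rule derivable_prefix, rule ax_W)
  finally show ?thesis .
qed

lemma derivable_S': "\<turnstile> (C \<rightarrow>\<^sub>f A) \<rightarrow>\<^sub>f (C \<rightarrow>\<^sub>f A \<rightarrow>\<^sub>f B) \<rightarrow>\<^sub>f (C \<rightarrow>\<^sub>f B)"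
proof -
  have "\<turnstile> (C \<rightarrow>\<^sub>f A) \<rightarrow>\<^sub>f (A \<rightarrow>\<^sub>f B) \<rightarrow>\<^sub>f (C \<rightarrow>\<^sub>f B)"
    by (rule ax_B')
  also have "\<turnstile> ((A \<rightarrow>\<^sub>f B) \<rightarrow>\<^sub>f (C \<rightarrow>\<^sub>f B)) \<rightarrow>\<^sub>f (C \<rightarrow>\<^sub>f A \<rightarrow>\<^sub>f B) \<rightarrow>\<^sub>f (C \<rightarrow>\<^sub>f C \<rightarrow>\<^sub>f B)"
    by (rule ax_B)
  also have "\<turnstile> ((C \<rightarrow>\<^sub>f A \<rightarrow>\<^sub>f B) \<rightarrow>\<^sub>f (C \<rightarrow>\<^sub>f C \<rightarrow>\<^sub>f B)) \<rightarrow>\<^sub>f ((C \<rightarrow>\<^sub>f A \<rightarrow>\<^sub>f B) \<rightarrow>\<^sub>f (C \<rightarrow>\<^sub>f B))"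
    by (rule derivable_prefix, rule ax_W)
  finally show ?thesis .
qed

definition imps :: "('i::linorder \<Rightarrow> 'a form) \<Rightarrow> 'i set \<Rightarrow> 'a form \<Rightarrow> 'a form" where
  "imps G S \<phi> = foldr (\<lambda>i \<psi>. G i \<rightarrow>\<^sub>f \<psi>) (sorted_list_of_set S) \<phi>"

lemma imps_empty [simp]: "imps G {} \<phi> = \<phi>"
  by (simp add: imps_def)

lemma imps_Max:
  "finite S \<Longrightarrow> S \<noteq> {} \<Longrightarrow> imps G S \<phi> = imps G (S - {Max S}) (G (Max S) \<rightarrow>\<^sub>f \<phi>)"
  unfolding imps_def by (simp add: sorted_list_of_set_Max)

lemma derivable_imps_mono: "\<turnstile> X \<rightarrow>\<^sub>f Y \<Longrightarrow> \<turnstile> imps G S X \<Longrightarrow> \<turnstile> imps G S Y"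
proof -
  have "\<turnstile> X \<rightarrow>\<^sub>f Y \<Longrightarrow> \<turnstile> foldr (\<lambda>i \<psi>. G i \<rightarrow>\<^sub>f \<psi>) xs X \<rightarrow>\<^sub>f foldr (\<lambda>i \<psi>. G i \<rightarrow>\<^sub>f \<psi>) xs Y" for xs
    by (induction xs) (auto intro: derivable_prefix)
  then show "\<turnstile> X \<rightarrow>\<^sub>f Y \<Longrightarrow> \<turnstile> imps G S X \<Longrightarrow> \<turnstile> imps G S Y"
    unfolding imps_def using mp by blast
qed

text \<open>The premise \<open>G (Max N)\<close> is peeled off both sides; if the function side lacks it,
  \<open>B\<close>/\<open>B'\<close> insert it, otherwise \<open>S\<close>/\<open>S'\<close> contract the two copies. The remaining premise
  sets may now dominate each other either way, which is why both orientations are kept.\<close>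

lemma derivable_imps_merge:
  assumes "finite M" "finite N" "\<turnstile> imps G M (A \<rightarrow>\<^sub>f B)" "\<turnstile> imps G N A" "dominated M N"
  shows "\<turnstile> imps G (M \<union> N) B"
  using assms
proof (induction "card (M \<union> N)" arbitrary: M N A B rule: less_induct)
  case less
  show ?case
  proof (cases "N = {}")
    case True
    with less.prems mp[of A B] show ?thesis by (simp add: dominated_empty_iff)
  next
    case N_ne: False
    define x where "x = Max N"
    define M\<^sub>0 N\<^sub>0 where "M\<^sub>0 = M - {x}" and "N\<^sub>0 = N - {x}"
    have x_in: "x \<in> N" using N_ne less.prems(2) by (simp add: x_def)
    have x_Max: "Max (M \<union> N) = x"
      using less.prems N_ne dominated_Max_le x_in by (intro Max_eqI) (auto simp: x_def)
    have fin: "finite M\<^sub>0" "finite N\<^sub>0" using less.prems by (auto simp: M\<^sub>0_def N\<^sub>0_def)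
    have N\<^sub>0: "\<turnstile> imps G N\<^sub>0 (G x \<rightarrow>\<^sub>f A)"
      using imps_Max[OF less.prems(2) N_ne, of G A] less.prems(4) by (simp add: N\<^sub>0_def x_def)
    obtain C where M\<^sub>0: "\<turnstile> imps G M\<^sub>0 C"
      and C_left: "\<turnstile> C \<rightarrow>\<^sub>f (G x \<rightarrow>\<^sub>f A) \<rightarrow>\<^sub>f (G x \<rightarrow>\<^sub>f B)"
      and C_right: "\<turnstile> (G x \<rightarrow>\<^sub>f A) \<rightarrow>\<^sub>f C \<rightarrow>\<^sub>f (G x \<rightarrow>\<^sub>f B)"
    proof (cases "x \<in> M")
      case True
      then have "Max M = x"
        using less.prems N_ne dominated_Max_le by (intro Max_eqI) (auto simp: x_def)
      moreover have "M \<noteq> {}" using True by blast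
      ultimately have "\<turnstile> imps G M\<^sub>0 (G x \<rightarrow>\<^sub>f A \<rightarrow>\<^sub>f B)"
        using imps_Max[OF less.prems(1), of G "A \<rightarrow>\<^sub>f B"] less.prems(3) by (simp add: M\<^sub>0_def)
      then show ?thesis by (rule that[OF _ derivable_S derivable_S'])
    next
      case False
      then have "M\<^sub>0 = M" by (simp add: M\<^sub>0_def)
      with less.prems(3) show ?thesis by (intro that[of "A \<rightarrow>\<^sub>f B"] ax_B ax_B') simp
    qed
    have U: "M\<^sub>0 \<union> N\<^sub>0 = (M \<union> N) - {x}" by (auto simp: M\<^sub>0_def N\<^sub>0_def)
    have card: "card (M\<^sub>0 \<union> N\<^sub>0) < card (M \<union> N)"
      unfolding U using less.prems(1,2) x_in by (intro card_Diff1_less) auto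
    have "\<turnstile> imps G (M\<^sub>0 \<union> N\<^sub>0) (G x \<rightarrow>\<^sub>f B)"
    proof (cases "dominated M\<^sub>0 N\<^sub>0")
      case True
      then show ?thesis
        by (rule less.hyps[OF card fin derivable_imps_mono[OF C_left M\<^sub>0] N\<^sub>0])
    next
      case False
      then have "dominated N\<^sub>0 M\<^sub>0" by (rule not_dominated_imp_dominated)
      moreover have "card (N\<^sub>0 \<union> M\<^sub>0) < card (M \<union> N)" using card by (simp add: Un_commute)
      ultimately have "\<turnstile> imps G (N\<^sub>0 \<union> M\<^sub>0) (G x \<rightarrow>\<^sub>f B)"
        using less.hyps[OF _ fin(2,1) derivable_imps_mono[OF C_right N\<^sub>0] M\<^sub>0] by blast
      then show ?thesis by (simp add: Un_commute)
    qed
    moreover have "imps G (M \<union> N) B = imps G (M\<^sub>0 \<union> N\<^sub>0) (G x \<rightarrow>\<^sub>f B)"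
      using imps_Max[of "M \<union> N" G B] less.prems(1,2) N_ne by (simp add: x_Max U)
    ultimately show ?thesis by simp
  qed
qed

subsection \<open>Typed terms yield derivations\<close>

lemma finite_FV: "finite (FV M)"
  by (induction M) auto

lemma has_type_HRM: "has_type ord \<Omega> M \<psi> \<Longrightarrow> HRM ord M"
  by (induction rule: has_type.induct) (auto intro: HRM.intros)

lemma has_type_derivable_imps:
  assumes "inj ord"
  shows "has_type ord \<Omega> M \<psi> \<Longrightarrow> \<turnstile> imps (\<lambda>i. \<Omega> (inv ord i)) (ord ` FV M) \<psi>"
proof (induction rule: has_type.induct)
  case (ty_Var x)
  show ?case using assms by (simp add: imps_def ax_I)
next
  case (ty_Lam M \<psi> x)
  let ?G = "\<lambda>i. \<Omega> (inv ord i)"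
  have "greatest_fv ord x M" using ty_Lam.hyps by (auto elim: HRM.cases)
  then have x: "x \<in> FV M" and le: "\<forall>y\<in>FV M. ord y \<le> ord x"
    unfolding greatest_fv_def by blast+
  then have ne: "ord ` FV M \<noteq> {}" by blast
  have Max: "Max (ord ` FV M) = ord x"
    using x le by (intro Max_eqI finite_imageI finite_FV) auto
  have "imps ?G (ord ` FV M) \<psi> = imps ?G (ord ` FV M - {ord x}) (?G (ord x) \<rightarrow>\<^sub>f \<psi>)"
    using imps_Max[OF finite_imageI[OF finite_FV] ne] by (simp only: Max)
  also have "\<dots> = imps ?G (ord ` (FV M - {x})) (\<Omega> x \<rightarrow>\<^sub>f \<psi>)"
    using assms by (simp add: image_set_diff)
  finally show ?case using ty_Lam.IH by simp
next
  case (ty_App M \<chi> \<psi> N)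
  then have "dominated (ord ` FV M) (ord ` FV N)"
    unfolding dominated_def by (auto elim: HRM.cases)
  with ty_App.IH have "\<turnstile> imps (\<lambda>i. \<Omega> (inv ord i)) (ord ` FV M \<union> ord ` FV N) \<psi>"
    by (intro derivable_imps_merge finite_imageI finite_FV)
  then show ?case by (simp add: image_Un)
qed

lemma NF_inhabited_derivable:
  assumes "inj ord" "NF_inhabited ord \<Omega> \<phi>"
  shows "\<turnstile> \<phi>"
proof -
  obtain M where "closed M" "has_type ord \<Omega> M \<phi>"
    using assms(2) by (auto simp: NF_inhabited_def)
  with has_type_derivable_imps[OF assms(1), of \<Omega> M \<phi>] show ?thesis by (simp add: closed_def)
qed

subsection \<open>Derivable formulas are inhabited\<close>

locale inhabitation =
  fixes ord :: "'v \<Rightarrow> nat" and \<Omega> :: "'v \<Rightarrow> 'a form"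
  assumes inj_ord: "inj ord"
    and infinite_fibres: "\<And>\<psi>. infinite (\<Omega> -` {\<psi>})"
begin

definition typed_nf :: "'v trm \<Rightarrow> 'v set \<Rightarrow> 'a form \<Rightarrow> bool" where
  "typed_nf M N A \<longleftrightarrow> has_type ord \<Omega> M A \<and> FV M = N \<and> wf_term M \<and> beta_normal M"

text \<open>Inhabitants are required to exist with binders avoiding any given finite set, so that
  they can be combined without violating the variable convention.\<close>

definition inhabited_ne :: "'v set \<Rightarrow> 'a form \<Rightarrow> bool" where
  "inhabited_ne N A \<longleftrightarrow> (\<forall>F. finite F \<longrightarrow>
     (\<exists>M. typed_nf M N A \<and> (\<forall>x P. M \<noteq> Lam x P) \<and> set (binders M) \<inter> F = {}))"

definition inhabited_nf :: "'v set \<Rightarrow> 'a form \<Rightarrow> bool" where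
  "inhabited_nf N A \<longleftrightarrow> (\<forall>F. finite F \<longrightarrow> (\<exists>M. typed_nf M N A \<and> set (binders M) \<inter> F = {}))"

fun Sem :: "'a form \<Rightarrow> 'v set \<Rightarrow> bool" where
  "Sem (Atom p) N = inhabited_ne N (Atom p)"
| "Sem (A \<rightarrow>\<^sub>f B) N =
     (\<forall>b. finite b \<longrightarrow> Sem A b \<longrightarrow> dominated (ord ` N) (ord ` b) \<longrightarrow> Sem B (N \<union> b))"

declare Sem.simps(2) [simp del]

lemma SemI:
  "(\<And>b. finite b \<Longrightarrow> Sem A b \<Longrightarrow> dominated (ord ` N) (ord ` b) \<Longrightarrow> Sem B (N \<union> b))
    \<Longrightarrow> Sem (A \<rightarrow>\<^sub>f B) N"
  by (simp add: Sem.simps(2))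

lemma SemE:
  "Sem (A \<rightarrow>\<^sub>f B) N \<Longrightarrow> finite b \<Longrightarrow> Sem A b \<Longrightarrow> dominated (ord ` N) (ord ` b)
    \<Longrightarrow> Sem B (N \<union> b)"
  by (simp add: Sem.simps(2))

lemma exists_fresh_var:
  assumes "finite X"
  obtains i where "\<Omega> i = A" "\<forall>y\<in>X. ord y < ord i"
proof -
  have "inj_on ord (\<Omega> -` {A})" using inj_ord by (rule inj_on_subset) simp
  then have "infinite (ord ` (\<Omega> -` {A}))"
    using infinite_fibres[of A] by (simp add: finite_image_iff)
  moreover obtain m where "\<forall>y\<in>X. ord y < m"
    using finite_nat_set_iff_bounded[of "ord ` X"] assms by auto
  ultimately have "\<not> ord ` (\<Omega> -` {A}) \<subseteq> {..<m}"
    using finite_subset by blast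
  then obtain i where "\<Omega> i = A" "\<not> ord i < m" by blast
  with \<open>\<forall>y\<in>X. ord y < m\<close> show ?thesis by (intro that[of i]) (auto simp: not_less)
qed

lemma inhabited_ne_imp_nf: "inhabited_ne N A \<Longrightarrow> inhabited_nf N A"
  unfolding inhabited_ne_def inhabited_nf_def by blast

lemma inhabited_ne_Var: "inhabited_ne {i} (\<Omega> i)"
  unfolding inhabited_ne_def typed_nf_def wf_term_def
  by (intro allI impI exI[of _ "Var i"]) (auto intro: has_type.intros)

lemma inhabited_ne_App:
  assumes "inhabited_ne N\<^sub>1 (A \<rightarrow>\<^sub>f B)" "inhabited_nf N\<^sub>2 A"
    and "dominated (ord ` N\<^sub>1) (ord ` N\<^sub>2)" "finite N\<^sub>2"
  shows "inhabited_ne (N\<^sub>1 \<union> N\<^sub>2) B"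
  unfolding inhabited_ne_def
proof (intro allI impI)
  fix F :: "'v set" assume F: "finite F"
  obtain M\<^sub>1 where M\<^sub>1: "typed_nf M\<^sub>1 N\<^sub>1 (A \<rightarrow>\<^sub>f B)" "\<forall>x P. M\<^sub>1 \<noteq> Lam x P"
      "set (binders M\<^sub>1) \<inter> (F \<union> N\<^sub>2) = {}"
    using assms(1,4) F unfolding inhabited_ne_def by (meson finite_UnI)
  obtain M\<^sub>2 where M\<^sub>2: "typed_nf M\<^sub>2 N\<^sub>2 A"
      "set (binders M\<^sub>2) \<inter> (F \<union> FV M\<^sub>1 \<union> set (binders M\<^sub>1)) = {}"
    using assms(2) F finite_FV[of M\<^sub>1] unfolding inhabited_nf_def by (meson finite_UnI finite_set)
  have "HRM ord (App M\<^sub>1 M\<^sub>2)"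
  proof (rule HRM_App)
    show "HRM ord M\<^sub>1" "HRM ord M\<^sub>2"
      using M\<^sub>1(1) M\<^sub>2(1) unfolding typed_nf_def by (meson has_type_HRM)+
    show "\<forall>x\<in>FV M\<^sub>1. \<exists>y\<in>FV M\<^sub>2. ord x \<le> ord y"
      using M\<^sub>1(1) M\<^sub>2(1) assms(3) unfolding typed_nf_def dominated_def by auto
  qed
  with M\<^sub>1 M\<^sub>2 have "typed_nf (App M\<^sub>1 M\<^sub>2) (N\<^sub>1 \<union> N\<^sub>2) B"
    unfolding typed_nf_def wf_term_def by (auto intro: ty_App)
  with M\<^sub>1 M\<^sub>2 show "\<exists>M. typed_nf M (N\<^sub>1 \<union> N\<^sub>2) B \<and> (\<forall>x P. M \<noteq> Lam x P)
      \<and> set (binders M) \<inter> F = {}"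
    by (intro exI[of _ "App M\<^sub>1 M\<^sub>2"]) auto
qed

lemma inhabited_nf_Lam:
  assumes "\<And>i. \<Omega> i = A \<Longrightarrow> \<forall>y\<in>N. ord y < ord i \<Longrightarrow> inhabited_nf (insert i N) B" "finite N"
  shows "inhabited_nf N (A \<rightarrow>\<^sub>f B)"
  unfolding inhabited_nf_def
proof (intro allI impI)
  fix F :: "'v set" assume F: "finite F"
  have "finite (N \<union> F)" using F assms(2) by simp
  then obtain i where i: "\<Omega> i = A" "\<forall>y\<in>N \<union> F. ord y < ord i"
    by (rule exists_fresh_var)
  then have "inhabited_nf (insert i N) B" using assms(1) by blast
  then obtain M where M: "typed_nf M (insert i N) B" "set (binders M) \<inter> insert i F = {}"
    using F unfolding inhabited_nf_def by (meson finite_insert)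
  have i_fresh: "i \<notin> N" "i \<notin> F" using i(2) by blast+
  have "greatest_fv ord i M"
    using M(1) i(2) unfolding typed_nf_def greatest_fv_def by (auto intro: less_imp_le)
  with M(1) have "HRM ord (Lam i M)"
    unfolding typed_nf_def by (blast intro: HRM_Lam has_type_HRM)
  with M i_fresh i(1) have "typed_nf (Lam i M) N (A \<rightarrow>\<^sub>f B)"
    unfolding typed_nf_def wf_term_def by (auto intro: ty_Lam)
  with M i_fresh show "\<exists>M. typed_nf M N (A \<rightarrow>\<^sub>f B) \<and> set (binders M) \<inter> F = {}"
    by (intro exI[of _ "Lam i M"]) auto
qed

lemma reflect_reify:
  "finite N \<Longrightarrow> (inhabited_ne N A \<longrightarrow> Sem A N) \<and> (Sem A N \<longrightarrow> inhabited_nf N A)"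
proof (induction A arbitrary: N)
  case (Atom p)
  then show ?case by (simp add: inhabited_ne_imp_nf)
next
  case (Imp A B)
  show ?case
  proof (intro conjI impI)
    assume AB: "inhabited_ne N (A \<rightarrow>\<^sub>f B)"
    show "Sem (A \<rightarrow>\<^sub>f B) N"
    proof (rule SemI)
      fix b assume b: "finite b" "Sem A b" "dominated (ord ` N) (ord ` b)"
      then have "inhabited_nf b A" using Imp.IH(1) by blast
      then have "inhabited_ne (N \<union> b) B" by (rule inhabited_ne_App[OF AB _ b(3,1)])
      then show "Sem B (N \<union> b)" using Imp.IH(2)[of "N \<union> b"] Imp.prems b(1) by simp
    qed
  next
    assume AB: "Sem (A \<rightarrow>\<^sub>f B) N"
    show "inhabited_nf N (A \<rightarrow>\<^sub>f B)"
    proof (rule inhabited_nf_Lam[OF _ Imp.prems])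
      fix i assume i: "\<Omega> i = A" "\<forall>y\<in>N. ord y < ord i"
      then have "Sem A {i}" using Imp.IH(1) inhabited_ne_Var by blast
      moreover have "dominated (ord ` N) (ord ` {i})"
        using i(2) unfolding dominated_def by (auto intro: less_imp_le)
      ultimately have "Sem B (N \<union> {i})" using SemE[OF AB] by blast
      then show "inhabited_nf (insert i N) B" using Imp.IH(2) Imp.prems by simp
    qed
  qed
qed

text \<open>Worlds are combined by union, so \<open>B\<close>, \<open>B'\<close> and \<open>W\<close> are valid because union is
  associative, commutative and idempotent.\<close>

lemma derivable_Sem: "\<turnstile> \<phi> \<Longrightarrow> Sem \<phi> {}"
proof (induction rule: BBIW_derivable.induct)
  case (ax_B \<chi> \<psi> \<phi>)
  show ?case
  proof (intro SemI, unfold Un_empty_left)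
    fix a b c
    assume a: "finite a" "Sem (\<chi> \<rightarrow>\<^sub>f \<psi>) a"
      and b: "finite b" "Sem (\<phi> \<rightarrow>\<^sub>f \<chi>) b" "dominated (ord ` a) (ord ` b)"
      and c: "finite c" "Sem \<phi> c" "dominated (ord ` (a \<union> b)) (ord ` c)"
    have "Sem \<chi> (b \<union> c)" using SemE[OF b(2) c(1,2)] c(3) by (simp add: image_Un)
    then have "Sem \<psi> (a \<union> (b \<union> c))"
      using SemE[OF a(2), of "b \<union> c"] b c by (simp add: image_Un dominated_UnI1)
    then show "Sem \<psi> (a \<union> b \<union> c)" by (simp add: Un_assoc)
  qed
next
  case (ax_B' \<phi> \<chi> \<psi>)
  show ?case
  proof (intro SemI, unfold Un_empty_left)
    fix a b c
    assume a: "finite a" "Sem (\<phi> \<rightarrow>\<^sub>f \<chi>) a"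
      and b: "finite b" "Sem (\<chi> \<rightarrow>\<^sub>f \<psi>) b" "dominated (ord ` a) (ord ` b)"
      and c: "finite c" "Sem \<phi> c" "dominated (ord ` (a \<union> b)) (ord ` c)"
    have "Sem \<chi> (a \<union> c)" using SemE[OF a(2) c(1,2)] c(3) by (simp add: image_Un)
    then have "Sem \<psi> (b \<union> (a \<union> c))"
      using SemE[OF b(2), of "a \<union> c"] a c by (simp add: image_Un dominated_UnI2)
    then show "Sem \<psi> (a \<union> b \<union> c)" by (simp add: Un_ac)
  qed
next
  case (ax_I \<phi>)
  then show ?case by (intro SemI) simp
next
  case (ax_W \<phi> \<chi>)
  show ?case
  proof (intro SemI, unfold Un_empty_left)
    fix a b
    assume a: "finite a" "Sem (\<phi> \<rightarrow>\<^sub>f \<phi> \<rightarrow>\<^sub>f \<chi>) a"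
      and b: "finite b" "Sem \<phi> b" "dominated (ord ` a) (ord ` b)"
    have "Sem (\<phi> \<rightarrow>\<^sub>f \<chi>) (a \<union> b)" using SemE[OF a(2) b] .
    then have "Sem \<chi> (a \<union> b \<union> b)" using SemE[of \<phi> \<chi> "a \<union> b" b] b by (simp add: image_Un)
    then show "Sem \<chi> (a \<union> b)" by (simp add: Un_assoc)
  qed
next
  case (mp \<phi> \<psi>)
  then show ?case using SemE[of \<phi> \<psi> "{}" "{}"] by simp
qed

lemma derivable_NF_inhabited: "\<turnstile> \<phi> \<Longrightarrow> NF_inhabited ord \<Omega> \<phi>"
proof -
  assume "\<turnstile> \<phi>"
  then have "inhabited_nf {} \<phi>" using derivable_Sem reflect_reify[of "{}" \<phi>] by simp
  then obtain M where "typed_nf M {} \<phi>" unfolding inhabited_nf_def by blast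
  then show ?thesis unfolding NF_inhabited_def typed_nf_def closed_def by blast
qed

end

theorem lemma1p10:
  fixes ord :: "'v \<Rightarrow> nat" and \<Omega> :: "'v \<Rightarrow> 'a form"
  assumes "infinite (UNIV :: 'v set)"
    and "inj ord"
    and "\<And>\<psi>. infinite (\<Omega> -` {\<psi>})"
  shows "BBIW_derivable \<phi> \<longleftrightarrow> NF_inhabited ord \<Omega> \<phi>"
proof -
  interpret inhabitation ord \<Omega> using assms(2,3) by unfold_locales
  show ?thesis using derivable_NF_inhabited NF_inhabited_derivable[OF assms(2)] by blast
qed

end
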